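(* Let $(X(t),T(t))_{t\ge0}$ be the joint KMP–temperature process described in the context, with arbitrary initial condition $(X(0),T(0))\in\mathbb R_+^{\overline{\mathbb V}}\times\mathbb R_+^{\overline{\mathbb V}}$ satisfying $T_j(0)=T_j$ for all $j\in\partial\mathbb V$, and define $\zeta_i(t):=X_i(t)T_i(t)$ for $i\in\overline{\mathbb V}$. Then the marginal process $X(t)$ is a Markov process with generator $L^\zeta$ with boundary temperatures identically equal to $1$ (i.e. $T_j=1$ for all $j\in\partial\mathbb V$ in the definition of $L^\zeta$), and the process $\zeta(t)$ is a Markov process with generator $L^\zeta$ with boundary temperatures $T_{\partial\mathbb V}=(T_j)_{j\in\partial\mathbb V}$; that is, both are boundary driven KMP processes.
   Context: Graph: $(\overline{\mathbb V},\overline E)$ is a finite oriented graph; $\overline{\mathbb V}=\mathbb V\cup\partial\mathbb V$ (disjoint; internal and boundary vertices). There is at most one edge between any pair of vertices and if $ij\in\overline E$ then $ji\notin\overline E$. $E$ is the set of edges with both endpoints in $\mathbb V$, $\partial E$ the set of edges with one endpoint in $\partial\mathbb V$; there are no edges between two boundary vertices, and every boundary edge is written $ij$ with $i\in\mathbb V$, $j\in\partial\mathbb V$. $\overline E=E\cup\partial E$. Each $j\in\partial\mathbb V$ carries a fixed temperature $T_j>0$. KMP process with boundary temperatures $T_{\partial\mathbb V}$: Markov process on $\mathbb R_+^{\overline{\mathbb V}}$ with generator $L^\zeta f(\zeta)=\sum_{ij\in E}\int_0^1du\,[f(H^\zeta_{ij;u}\zeta)-f(\zeta)]+\sum_{ij\in\partial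 E}\int_0^1du\int_0^\infty db\,e^{-b}[f(H^\zeta_{ij;u,b}\zeta)-f(\zeta)]$, where $(H^\zeta_{ij;u}\zeta)_i=u(\zeta_i+\zeta_j)$, $(H^\zeta_{ij;u}\zeta)_j=(1-u)(\zeta_i+\zeta_j)$, $(H^\zeta_{ij;u,b}\zeta)_i=u(\zeta_i+\zeta_j)$, $(H^\zeta_{ij;u,b}\zeta)_j=bT_j$, and all other coordinates unchanged. Joint KMP–temperature process $(X,T)$ on $\mathbb R_+^{\overline{\mathbb V}}\times\mathbb R_+^{\overline{\mathbb V}}$: generator $L^{X,T}f(X,T)=\sum_{ij\in E}\int_0^1du\,[f(H_{i,j;u}(X,T))-f(X,T)]+\sum_{ij\in\partial E}\int_0^\infty db\,e^{-b}\int_0^1du\,[f(H_{i,j;b,u}(X,T))-f(X,T)]$, where, writing $\bar T:=\frac{X_i}{X_i+X_j}T_i+\frac{X_j}{X_i+X_j}T_j$: $H_{i,j;u}$ sets $(X_i,T_i)\to(u(X_i+X_j),\bar T)$, $(X_j,T_j)\to((1-u)(X_i+X_j),\bar T)$ and leaves other coordinates unchanged; $H_{i,j;b,u}$ (for $j\in\partial\mathbb V$) sets $(X_i,T_i)\to(u(X_i+X_j),\bar T)$, $(X_j,T_j)\to(b,T_j)$ and leaves other coordinates unchanged. In particular $T_j(t)=T_j$ for all $t$ and all $j\in\partial\mathbb V$. *)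

theory Defs
  imports "HOL-Analysis.Analysis"
begin

text \<open>The full vertex set is the finite type 'v; B is the set of
boundary vertices, internal vertices are those not in B. Ed is the set of all oriented
edges (the paper's E-bar). Internal edges: both endpoints internal; boundary edges (i,j):
i internal, j in B.\<close>

definition graph_ok :: "('v \<times> 'v) set \<Rightarrow> 'v set \<Rightarrow> bool" where
  "graph_ok Ed B \<longleftrightarrow> (\<forall>(i,j)\<in>Ed. (j,i) \<notin> Ed \<and> i \<notin> B)"

definition int_edges :: "('v \<times> 'v) set \<Rightarrow> 'v set \<Rightarrow> ('v \<times> 'v) set" where
  "int_edges Ed B = {e \<in> Ed. snd e \<notin> B}"

definition bd_edges :: "('v \<times> 'v) set \<Rightarrow> 'v set \<Rightarrow> ('v \<times> 'v) set" where
  "bd_edges Ed B = {e \<in> Ed. snd e \<in> B}"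

definition KMP_gen ::
  "('v \<times> 'v) set \<Rightarrow> 'v set \<Rightarrow> ('v \<Rightarrow> real) \<Rightarrow> (('v \<Rightarrow> real) \<Rightarrow> real) \<Rightarrow> ('v \<Rightarrow> real) \<Rightarrow> real" where
  "KMP_gen Ed B Tb f z =
     (\<Sum>(i,j)\<in>int_edges Ed B.
        (\<integral>u\<in>{0..1}. (f (z(i := u * (z i + z j), j := (1 - u) * (z i + z j))) - f z) \<partial>lborel))
   + (\<Sum>(i,j)\<in>bd_edges Ed B.
        (\<integral>u\<in>{0..1}. (\<integral>b\<in>{0..}. exp (- b) *
            (f (z(i := u * (z i + z j), j := b * Tb j)) - f z) \<partial>lborel) \<partial>lborel))"

definition Tbar :: "('v \<Rightarrow> real) \<Rightarrow> ('v \<Rightarrow> real) \<Rightarrow> 'v \<Rightarrow> 'v \<Rightarrow> real" where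
  "Tbar X T i j = X i / (X i + X j) * T i + X j / (X i + X j) * T j"

definition XT_gen ::
  "('v \<times> 'v) set \<Rightarrow> 'v set \<Rightarrow> (('v \<Rightarrow> real) \<times> ('v \<Rightarrow> real) \<Rightarrow> real)
     \<Rightarrow> ('v \<Rightarrow> real) \<times> ('v \<Rightarrow> real) \<Rightarrow> real" where
  "XT_gen Ed B f s = (case s of (X, T) \<Rightarrow>
     (\<Sum>(i,j)\<in>int_edges Ed B.
        (\<integral>u\<in>{0..1}. (f (X(i := u * (X i + X j), j := (1 - u) * (X i + X j)),
                          T(i := Tbar X T i j, j := Tbar X T i j)) - f (X, T)) \<partial>lborel))
   + (\<Sum>(i,j)\<in>bd_edges Ed B.
        (\<integral>b\<in>{0..}. exp (- b) * (\<integral>u\<in>{0..1}.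
            (f (X(i := u * (X i + X j), j := b), T(i := Tbar X T i j)) - f (X, T)) \<partial>lborel) \<partial>lborel)))"

definition semigroup :: "(('s \<Rightarrow> real) \<Rightarrow> ('s \<Rightarrow> real)) \<Rightarrow> real \<Rightarrow> ('s \<Rightarrow> real) \<Rightarrow> 's \<Rightarrow> real" where
  "semigroup L t f z = (\<Sum>n. t ^ n / fact n * (L ^^ n) f z)"

text \<open>Finite-dimensional distributions of the Markov process with generator L started at z:
  fdd L [(s1,g1),...,(sn,gn)] z = E_z[g1(Z(s1)) g2(Z(s1+s2)) ... gn(Z(s1+...+sn))].\<close>
fun fdd :: "(('s \<Rightarrow> real) \<Rightarrow> ('s \<Rightarrow> real)) \<Rightarrow> (real \<times> ('s \<Rightarrow> real)) list \<Rightarrow> 's \<Rightarrow> real" where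
  "fdd L [] z = 1"
| "fdd L ((s, g) # ps) z = semigroup L s (\<lambda>w. g w * fdd L ps w) z"

end

theory Submission
  imports Defs "HOL-Probability.Distributions"
begin

text \<open>Both claims are intertwining relations between bounded generators. For bounded measurable f,
  the joint generator applied to f(X) equals L^zeta with unit boundary temperatures applied to f at X,
  and applied to f(XT) it equals L^zeta with temperatures Tb applied to f at XT, as long as X \<ge> 0
  and T = Tb on the boundary, a set of states the joint dynamics never leaves. At an internal edge
  both coordinates get the common temperature Tbar, the X-weighted mean, so XT is split in the
  proportions u and 1 - u exactly as X is; at a boundary edge the new X j = b is exponential and
  T j = Tb j, so (XT) j = b Tb j, and Fubini exchanges the u- and b-integrals. Generators of the
  KMP type are bounded by 2 |E| in sup norm, so the semigroups are convergent exponential series,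
  and the intertwining passes from the generators to their powers, to the semigroups and then,
  by induction on the number of times, to all finite-dimensional distributions.\<close>

section \<open>Bounded generators and intertwining\<close>

definition bounded_borel :: "('s::topological_space \<Rightarrow> real) set" where
  "bounded_borel = {f. f \<in> borel_measurable borel \<and> (\<exists>C. \<forall>x. \<bar>f x\<bar> \<le> C)}"

lemma bounded_borelI:
  "f \<in> borel_measurable borel \<Longrightarrow> (\<And>x. \<bar>f x\<bar> \<le> C) \<Longrightarrow> f \<in> bounded_borel"
  by (auto simp: bounded_borel_def)

lemma bounded_borel_mult:
  assumes "f \<in> bounded_borel" "g \<in> bounded_borel"
  shows "(\<lambda>x. f x * g x) \<in> bounded_borel"
proof -
  obtain C1 where f: "f \<in> borel_measurable borel" "\<And>x. \<bar>f x\<bar> \<le> C1"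
    using assms(1) unfolding bounded_borel_def by blast
  obtain C2 where g: "g \<in> borel_measurable borel" "\<And>x. \<bar>g x\<bar> \<le> C2"
    using assms(2) unfolding bounded_borel_def by blast
  have "\<bar>f x * g x\<bar> \<le> C1 * C2" for x
    unfolding abs_mult by (intro mult_mono f g) (use f(2)[of x] in auto)
  with f g show ?thesis by (intro bounded_borelI borel_measurable_times)
qed

lemma semigroup_bounded_borel:
  fixes L :: "('s::topological_space \<Rightarrow> real) \<Rightarrow> 's \<Rightarrow> real"
  assumes meas: "\<And>f C. f \<in> borel_measurable borel \<Longrightarrow> \<forall>x. \<bar>f x\<bar> \<le> C \<Longrightarrow>
      L f \<in> borel_measurable borel"
    and bound: "\<And>f C x. f \<in> borel_measurable borel \<Longrightarrow> \<forall>x. \<bar>f x\<bar> \<le> C \<Longrightarrow>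
      \<bar>L f x\<bar> \<le> K * C"
    and f: "f \<in> bounded_borel"
  shows "semigroup L t f \<in> bounded_borel"
proof -
  obtain C where fm: "f \<in> borel_measurable borel" and fb: "\<And>x. \<bar>f x\<bar> \<le> C"
    using f unfolding bounded_borel_def by blast
  have iter: "(L ^^ n) f \<in> borel_measurable borel \<and> (\<forall>x. \<bar>(L ^^ n) f x\<bar> \<le> K ^ n * C)" for n
  proof (induction n)
    case (Suc n)
    then show ?case
      using meas[of "(L ^^ n) f" "K ^ n * C"] bound[of "(L ^^ n) f" "K ^ n * C"] by (simp add: mult.assoc)
  qed (use fm fb in auto)
  define g where "g n = C * (inverse (fact n) * (\<bar>t\<bar> * K) ^ n)" for n
  have summable: "summable g" unfolding g_def by (intro summable_mult summable_exp)
  have term_bound: "norm (t ^ n / fact n * (L ^^ n) f x) \<le> g n" for n x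
  proof -
    have "norm (t ^ n / fact n * (L ^^ n) f x) = \<bar>t\<bar> ^ n / fact n * \<bar>(L ^^ n) f x\<bar>"
      by (simp add: abs_mult power_abs)
    also have "\<dots> \<le> \<bar>t\<bar> ^ n / fact n * (K ^ n * C)"
      using iter by (intro mult_left_mono) auto
    finally show ?thesis by (simp add: g_def power_mult_distrib field_simps)
  qed
  have "\<bar>semigroup L t f x\<bar> \<le> suminf g" for x
    unfolding semigroup_def using norm_suminf_le[OF term_bound summable] by simp
  moreover have "semigroup L t f \<in> borel_measurable borel"
    unfolding semigroup_def[abs_def]
    by (intro borel_measurable_suminf borel_measurable_times borel_measurable_const) (use iter in auto)
  ultimately show ?thesis by (intro bounded_borelI)
qed

lemma fdd_bounded_borel:
  assumes "\<And>t f. f \<in> bounded_borel \<Longrightarrow> semigroup L t f \<in> bounded_borel"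
  shows "\<forall>(t, g)\<in>set ps. g \<in> bounded_borel \<Longrightarrow> fdd L ps \<in> bounded_borel"
proof (induction ps)
  case Nil
  then show ?case using bounded_borelI[of "\<lambda>_. 1" 1] by (simp add: fun_eq_iff[symmetric])
next
  case (Cons p ps)
  obtain t g where p: "p = (t, g)" by fastforce
  have "fdd L (p # ps) = semigroup L t (\<lambda>w. g w * fdd L ps w)"
    by (simp add: p fun_eq_iff)
  moreover have "(\<lambda>w. g w * fdd L ps w) \<in> bounded_borel"
    using Cons p by (intro bounded_borel_mult) auto
  ultimately show ?case by (simp add: assms)
qed

text \<open>Locality says that LA h at a state of D only depends on h on D, i.e. the dynamics
  generated by LA never leaves D.\<close>
locale intertwined_generators =
  fixes LA :: "('a \<Rightarrow> real) \<Rightarrow> 'a \<Rightarrow> real"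
    and LB :: "('b::topological_space \<Rightarrow> real) \<Rightarrow> 'b \<Rightarrow> real"
    and \<Phi> :: "'a \<Rightarrow> 'b" and D :: "'a set"
  assumes locality:
      "\<And>h h' s. (\<And>s. s \<in> D \<Longrightarrow> h s = h' s) \<Longrightarrow> s \<in> D \<Longrightarrow> LA h s = LA h' s"
    and intertwines:
      "\<And>f s. f \<in> bounded_borel \<Longrightarrow> s \<in> D \<Longrightarrow> LA (\<lambda>w. f (\<Phi> w)) s = LB f (\<Phi> s)"
    and LB_bounded_borel: "\<And>f. f \<in> bounded_borel \<Longrightarrow> LB f \<in> bounded_borel"
    and semigroup_LB_bounded_borel: "\<And>t f. f \<in> bounded_borel \<Longrightarrow> semigroup LB t f \<in> bounded_borel"
begin

lemma funpow_locality:
  "(\<And>s. s \<in> D \<Longrightarrow> h s = h' s) \<Longrightarrow> s \<in> D \<Longrightarrow> (LA ^^ n) h s = (LA ^^ n) h' s"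
  by (induction n arbitrary: s) (auto intro: locality)

lemma funpow_intertwines:
  "f \<in> bounded_borel \<Longrightarrow> s \<in> D \<Longrightarrow> (LA ^^ n) (\<lambda>w. f (\<Phi> w)) s = (LB ^^ n) f (\<Phi> s)"
proof (induction n arbitrary: s)
  case (Suc n)
  have "(LB ^^ n) f \<in> bounded_borel"
    using Suc.prems(1) by (induction n) (auto intro: LB_bounded_borel)
  have "(LA ^^ Suc n) (\<lambda>w. f (\<Phi> w)) s = LA (\<lambda>w. (LB ^^ n) f (\<Phi> w)) s"
    using Suc by (auto intro: locality)
  also have "\<dots> = (LB ^^ Suc n) f (\<Phi> s)"
    using intertwines[OF \<open>(LB ^^ n) f \<in> bounded_borel\<close> Suc.prems(2)] by simp
  finally show ?case .
qed simp

lemma semigroup_locality: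
  "(\<And>s. s \<in> D \<Longrightarrow> h s = h' s) \<Longrightarrow> s \<in> D \<Longrightarrow> semigroup LA t h s = semigroup LA t h' s"
  unfolding semigroup_def using funpow_locality by metis

lemma semigroup_intertwines:
  "f \<in> bounded_borel \<Longrightarrow> s \<in> D \<Longrightarrow> semigroup LA t (\<lambda>w. f (\<Phi> w)) s = semigroup LB t f (\<Phi> s)"
  unfolding semigroup_def using funpow_intertwines by metis

lemma fdd_intertwines:
  "\<forall>(t, g)\<in>set ps. g \<in> bounded_borel \<Longrightarrow> s \<in> D \<Longrightarrow>
     fdd LA (map (\<lambda>(t, g). (t, \<lambda>w. g (\<Phi> w))) ps) s = fdd LB ps (\<Phi> s)"
proof (induction ps arbitrary: s)
  case (Cons p ps)
  obtain t g where p: "p = (t, g)" by fastforce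
  have g: "g \<in> bounded_borel" and ps: "\<forall>(t, g)\<in>set ps. g \<in> bounded_borel"
    using Cons.prems p by auto
  have "fdd LA (map (\<lambda>(t, g). (t, \<lambda>w. g (\<Phi> w))) (p # ps)) s
      = semigroup LA t (\<lambda>w. g (\<Phi> w) * fdd LA (map (\<lambda>(t, g). (t, \<lambda>w. g (\<Phi> w))) ps) w) s"
    by (simp add: p)
  also have "\<dots> = semigroup LA t (\<lambda>w. (\<lambda>z. g z * fdd LB ps z) (\<Phi> w)) s"
    using Cons.IH[OF ps] Cons.prems(2) by (intro semigroup_locality) auto
  also have "\<dots> = semigroup LB t (\<lambda>z. g z * fdd LB ps z) (\<Phi> s)"
    using bounded_borel_mult[OF g fdd_bounded_borel[OF semigroup_LB_bounded_borel ps]] Cons.prems(2)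
    by (rule semigroup_intertwines)
  finally show ?case by (simp add: p)
qed simp

end

section \<open>Integrals over the jump parameters\<close>

lemma continuous_on_fun_upd [continuous_intros]:
  fixes z :: "'a::topological_space \<Rightarrow> 'v \<Rightarrow> 'b::topological_space"
  assumes "continuous_on S z" "continuous_on S a"
  shows "continuous_on S (\<lambda>p. (z p)(i := a p))"
proof (rule continuous_on_coordinatewise_then_product)
  fix k
  show "continuous_on S (\<lambda>p. ((z p)(i := a p)) k)"
    using assms continuous_on_product_then_coordinatewise[OF assms(1), of k] by (cases "k = i") auto
qed

lemma continuous_on_apply:
  fixes z :: "'a::topological_space \<Rightarrow> 'v \<Rightarrow> 'b::topological_space"
  shows "continuous_on S z \<Longrightarrow> continuous_on S (\<lambda>p. z p k)"
  by (rule continuous_on_product_then_coordinatewise)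

lemma borel_measurable_continuous_comp:
  "f \<in> borel_measurable borel \<Longrightarrow> continuous_on UNIV g \<Longrightarrow> (\<lambda>x. f (g x)) \<in> borel_measurable borel"
  using measurable_compose[OF borel_measurable_continuous_onI] .

lemma borel_measurable_pair_lborel:
  fixes H :: "'a::second_countable_topology \<times> real \<Rightarrow> real"
  assumes "sets M = sets borel" "H \<in> borel_measurable borel"
  shows "H \<in> borel_measurable (M \<Otimes>\<^sub>M lborel)"
proof -
  have "sets (M \<Otimes>\<^sub>M lborel) = sets (borel \<Otimes>\<^sub>M (borel :: real measure))"
    using assms(1) by (intro sets_pair_measure_cong) auto
  then show ?thesis
    using assms(2) measurable_cong_sets[OF _ refl] by (metis borel_prod)
qed

lemma parametric_integral_bounded:
  fixes H :: "'a::second_countable_topology \<times> real \<Rightarrow> real"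
  assumes H: "H \<in> borel_measurable borel" and w: "integrable lborel w"
    and dominated: "\<And>x u. \<bar>H (x, u)\<bar> \<le> c x * w u"
  shows "(\<lambda>x. \<integral>u. H (x, u) \<partial>lborel) \<in> borel_measurable borel"
    and "integrable lborel (\<lambda>u. H (x, u))"
    and "\<bar>\<integral>u. H (x, u) \<partial>lborel\<bar> \<le> c x * (\<integral>u. w u \<partial>lborel)"
proof -
  have H': "H \<in> borel_measurable (borel \<Otimes>\<^sub>M lborel)"
    using H by (intro borel_measurable_pair_lborel) auto
  then show "(\<lambda>x. \<integral>u. H (x, u) \<partial>lborel) \<in> borel_measurable borel"
    using lborel.borel_measurable_lebesgue_integral[of "\<lambda>x u. H (x, u)" borel] by simp
  have cw: "integrable lborel (\<lambda>u. c x * w u)"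
    using w by simp
  show int: "integrable lborel (\<lambda>u. H (x, u))"
    using measurable_Pair2[OF H'] dominated
    by (intro Bochner_Integration.integrable_bound[OF cw] AE_I2)
       (auto intro: order_trans[OF _ abs_ge_self])
  show "\<bar>\<integral>u. H (x, u) \<partial>lborel\<bar> \<le> c x * (\<integral>u. w u \<partial>lborel)"
    using integral_abs_bound_integral[OF int cw] dominated by simp
qed

lemma integrable_exp_Ici: "integrable lborel (\<lambda>b::real. indicator {0..} b * exp (- b))"
  and integral_exp_Ici: "(\<integral>b. indicator {0..} b * exp (- b) \<partial>lborel) = (1::real)"
proof -
  have "(\<integral>\<^sup>+b. ennreal (indicator {0..} b * exp (- b)) \<partial>lborel)
      = (\<integral>\<^sup>+b. ennreal (exp (- b)) * indicator {0..} b \<partial>lborel)"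
    by (intro nn_integral_cong) (simp split: split_indicator)
  then have nn: "(\<integral>\<^sup>+b. ennreal (indicator {0..} b * exp (- b)) \<partial>lborel) = 1"
    using nn_intergal_power_times_exp_Ici[of 0] by simp
  show int: "integrable lborel (\<lambda>b::real. indicator {0..} b * exp (- b))"
    by (rule integrableI_nonneg) (auto simp: nn)
  show "(\<integral>b. indicator {0..} b * exp (- b) \<partial>lborel) = (1::real)"
    using nn_integral_eq_integral[OF int] nn by simp
qed

lemma borel_measurable_indicator_snd:
  "A \<in> sets borel \<Longrightarrow> (\<lambda>p :: 'a::topological_space \<times> 'b::topological_space. indicator A (snd p) :: real)
     \<in> borel_measurable borel"
  by (rule borel_measurable_continuous_comp[OF borel_measurable_indicator]) (auto intro: continuous_intros)

lemma set_integral_Icc01_bounded: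
  fixes H :: "'a::second_countable_topology \<times> real \<Rightarrow> real"
  assumes H: "H \<in> borel_measurable borel" "\<And>p. \<bar>H p\<bar> \<le> K"
  shows "(\<lambda>x. \<integral>u\<in>{0..1}. H (x, u) \<partial>lborel) \<in> borel_measurable borel"
    and "\<bar>\<integral>u\<in>{0..1}. H (x, u) \<partial>lborel\<bar> \<le> K"
proof -
  have "(\<lambda>p. indicator {0..1} (snd p) * H p) \<in> borel_measurable borel"
    using H(1) by (intro borel_measurable_times borel_measurable_indicator_snd) auto
  moreover have "\<bar>indicator {0..1} u * H (x, u)\<bar> \<le> K * indicator {0..1} u" for x u
    using H(2)[of "(x, u)"] by (simp split: split_indicator)
  ultimately show "(\<lambda>x. \<integral>u\<in>{0..1}. H (x, u) \<partial>lborel) \<in> borel_measurable borel"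
    and "\<bar>\<integral>u\<in>{0..1}. H (x, u) \<partial>lborel\<bar> \<le> K"
    using parametric_integral_bounded(1,3)[of "\<lambda>p. indicator {0..1} (snd p) * H p" "indicator {0..1}" "\<lambda>_. K"]
    by (simp_all add: set_lebesgue_integral_def)
qed

lemma set_integral_exp_Ici_bounded:
  fixes H :: "'a::second_countable_topology \<times> real \<Rightarrow> real"
  assumes H: "H \<in> borel_measurable borel" "\<And>p. \<bar>H p\<bar> \<le> K"
  shows "(\<lambda>x. \<integral>b\<in>{0..}. exp (- b) * H (x, b) \<partial>lborel) \<in> borel_measurable borel"
    and "\<bar>\<integral>b\<in>{0..}. exp (- b) * H (x, b) \<partial>lborel\<bar> \<le> K"
proof -
  have "(\<lambda>p :: 'a \<times> real. exp (- snd p)) \<in> borel_measurable borel"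
    by (intro borel_measurable_continuous_onI continuous_intros)
  then have "(\<lambda>p. indicator {0..} (snd p) * (exp (- snd p) * H p)) \<in> borel_measurable borel"
    using H(1) by (intro borel_measurable_times borel_measurable_indicator_snd) auto
  moreover have "\<bar>indicator {0..} b * (exp (- b) * H (x, b))\<bar> \<le> K * (indicator {0..} b * exp (- b))" for x b
    using H(2)[of "(x, b)"] by (simp add: abs_mult mult.commute split: split_indicator)
  ultimately show "(\<lambda>x. \<integral>b\<in>{0..}. exp (- b) * H (x, b) \<partial>lborel) \<in> borel_measurable borel"
    and "\<bar>\<integral>b\<in>{0..}. exp (- b) * H (x, b) \<partial>lborel\<bar> \<le> K"
    using parametric_integral_bounded(1,3)[of "\<lambda>p. indicator {0..} (snd p) * (exp (- snd p) * H p)"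
        "\<lambda>b. indicator {0..} b * exp (- b)" "\<lambda>_. K"] integrable_exp_Ici integral_exp_Ici
    by (simp_all add: set_lebesgue_integral_def)
qed

lemma integrable_pair_weighted_bounded:
  fixes \<Phi> :: "real \<times> real \<Rightarrow> real" and v w :: "real \<Rightarrow> real"
  assumes \<Phi>: "\<Phi> \<in> borel_measurable borel" "\<And>p. \<bar>\<Phi> p\<bar> \<le> C"
    and v: "integrable lborel v" "\<And>u. 0 \<le> v u" and w: "integrable lborel w" "\<And>b. 0 \<le> w b"
  shows "integrable (lborel \<Otimes>\<^sub>M lborel) (\<lambda>p. v (fst p) * w (snd p) * \<Phi> p)"
proof -
  define P where "P = (\<lambda>p. v (fst p) * w (snd p) * \<Phi> p)"
  have vm: "v \<in> borel_measurable borel" and wm: "w \<in> borel_measurable borel"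
    using v(1) w(1) by auto
  have "fst \<in> borel_measurable (borel :: (real \<times> real) measure)"
    and "snd \<in> borel_measurable (borel :: (real \<times> real) measure)"
    by (intro borel_measurable_continuous_onI continuous_intros)+
  then have Pm: "P \<in> borel_measurable borel"
    unfolding P_def
    by (intro borel_measurable_times measurable_compose[OF _ vm] measurable_compose[OF _ wm] \<Phi>(1))
  have dominated: "\<bar>P (u, b)\<bar> \<le> C * v u * w b" for u b
  proof -
    have "\<bar>P (u, b)\<bar> = v u * w b * \<bar>\<Phi> (u, b)\<bar>"
      by (simp add: P_def abs_mult v(2) w(2))
    also have "\<dots> \<le> v u * w b * C"
      by (intro mult_left_mono \<Phi>(2)) (simp add: v(2) w(2))
    finally show ?thesis by (simp add: ac_simps)
  qed
  have "(\<lambda>p. \<bar>P p\<bar>) \<in> borel_measurable borel"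
    using Pm by (rule borel_measurable_abs)
  note sections = parametric_integral_bounded[OF this w(1), of "\<lambda>u. C * v u"]
  have "integrable (lborel \<Otimes>\<^sub>M lborel) P"
  proof (rule lborel_pair.Fubini_integrable)
    show "P \<in> borel_measurable (lborel \<Otimes>\<^sub>M lborel)"
      using Pm by (intro borel_measurable_pair_lborel) auto
    show "integrable lborel (\<lambda>u. \<integral>b. norm (P (u, b)) \<partial>lborel)"
    proof (rule Bochner_Integration.integrable_bound)
      show "integrable lborel (\<lambda>u. C * (\<integral>b. w b \<partial>lborel) * v u)"
        using v(1) by simp
      show "(\<lambda>u. \<integral>b. norm (P (u, b)) \<partial>lborel) \<in> borel_measurable lborel"
        using sections(1) dominated by simp
      show "AE u in lborel. norm (\<integral>b. norm (P (u, b)) \<partial>lborel) \<le> norm (C * (\<integral>b. w b \<partial>lborel) * v u)"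
        using sections(3) dominated
        by (intro AE_I2) (auto simp: ac_simps intro: order_trans[OF _ abs_ge_self])
    qed
    show "AE u in lborel. integrable lborel (\<lambda>b. P (u, b))"
      using parametric_integral_bounded(2)[OF Pm w(1), of "\<lambda>u. C * v u"] dominated by simp
  qed
  then show ?thesis
    by (simp add: P_def)
qed

lemma Fubini_weighted_bounded:
  fixes \<Phi> :: "real \<times> real \<Rightarrow> real" and v w :: "real \<Rightarrow> real"
  assumes \<Phi>: "\<Phi> \<in> borel_measurable borel" "\<And>p. \<bar>\<Phi> p\<bar> \<le> C"
    and v: "integrable lborel v" "\<And>u. 0 \<le> v u" and w: "integrable lborel w" "\<And>b. 0 \<le> w b"
  shows "(\<integral>u. v u * (\<integral>b. w b * \<Phi> (u, b) \<partial>lborel) \<partial>lborel)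
       = (\<integral>b. w b * (\<integral>u. v u * \<Phi> (u, b) \<partial>lborel) \<partial>lborel)"
proof -
  have "(\<integral>b. (\<integral>u. v u * w b * \<Phi> (u, b) \<partial>lborel) \<partial>lborel)
      = (\<integral>u. (\<integral>b. v u * w b * \<Phi> (u, b) \<partial>lborel) \<partial>lborel)"
    using lborel_pair.Fubini_integral[of "\<lambda>u b. v u * w b * \<Phi> (u, b)"]
      integrable_pair_weighted_bounded[OF assms] by (simp add: case_prod_beta')
  moreover have "(\<integral>u. v u * w b * \<Phi> (u, b) \<partial>lborel) = w b * (\<integral>u. v u * \<Phi> (u, b) \<partial>lborel)" for b
    using integral_mult_right_zero[where c = "w b" and f = "\<lambda>u. v u * \<Phi> (u, b)"] by (simp add: ac_simps)
  moreover have "(\<integral>b. v u * w b * \<Phi> (u, b) \<partial>lborel) = v u * (\<integral>b. w b * \<Phi> (u, b) \<partial>lborel)" for u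
    using integral_mult_right_zero[where c = "v u" and f = "\<lambda>b. w b * \<Phi> (u, b)"] by (simp add: ac_simps)
  ultimately show ?thesis
    by simp
qed

section \<open>The KMP generator is bounded\<close>

lemma KMP_internal_term_bounded:
  fixes f :: "('v::finite \<Rightarrow> real) \<Rightarrow> real"
  assumes f: "f \<in> borel_measurable borel" "\<And>z. \<bar>f z\<bar> \<le> C"
  shows "(\<lambda>z. \<integral>u\<in>{0..1}. (f (z(i := u * (z i + z j), j := (1 - u) * (z i + z j))) - f z) \<partial>lborel)
           \<in> borel_measurable borel"
    and "\<bar>\<integral>u\<in>{0..1}. (f (z(i := u * (z i + z j), j := (1 - u) * (z i + z j))) - f z) \<partial>lborel\<bar> \<le> 2 * C"
proof -
  define jump where "jump p = (fst p)(i := snd p * (fst p i + fst p j), j := (1 - snd p) * (fst p i + fst p j))"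
    for p :: "('v \<Rightarrow> real) \<times> real"
  define H where "H p = f (jump p) - f (fst p)" for p
  have "continuous_on UNIV jump"
    unfolding jump_def[abs_def] by (intro continuous_intros continuous_on_apply[of _ fst])
  moreover have "continuous_on UNIV (fst :: ('v \<Rightarrow> real) \<times> real \<Rightarrow> 'v \<Rightarrow> real)"
    by (intro continuous_intros)
  ultimately have "H \<in> borel_measurable borel"
    unfolding H_def[abs_def] by (intro borel_measurable_diff borel_measurable_continuous_comp[OF f(1)])
  moreover have "\<bar>H p\<bar> \<le> 2 * C" for p
    using f(2)[of "fst p"] f(2)[of "jump p"] unfolding H_def by linarith
  ultimately show "(\<lambda>z. \<integral>u\<in>{0..1}. (f (z(i := u * (z i + z j), j := (1 - u) * (z i + z j))) - f z) \<partial>lborel)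
           \<in> borel_measurable borel"
    and "\<bar>\<integral>u\<in>{0..1}. (f (z(i := u * (z i + z j), j := (1 - u) * (z i + z j))) - f z) \<partial>lborel\<bar> \<le> 2 * C"
    using set_integral_Icc01_bounded[of H "2 * C"] by (simp_all add: H_def jump_def)
qed

lemma KMP_boundary_term_bounded:
  fixes f :: "('v::finite \<Rightarrow> real) \<Rightarrow> real"
  assumes f: "f \<in> borel_measurable borel" "\<And>z. \<bar>f z\<bar> \<le> C"
  shows "(\<lambda>z. \<integral>u\<in>{0..1}. (\<integral>b\<in>{0..}. exp (- b) *
            (f (z(i := u * (z i + z j), j := b * c)) - f z) \<partial>lborel) \<partial>lborel) \<in> borel_measurable borel"
    and "\<bar>\<integral>u\<in>{0..1}. (\<integral>b\<in>{0..}. exp (- b) *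
            (f (z(i := u * (z i + z j), j := b * c)) - f z) \<partial>lborel) \<partial>lborel\<bar> \<le> 2 * C"
proof -
  define jump where "jump q = (fst (fst q))(i := snd (fst q) * (fst (fst q) i + fst (fst q) j), j := snd q * c)"
    for q :: "(('v \<Rightarrow> real) \<times> real) \<times> real"
  define H where "H q = f (jump q) - f (fst (fst q))" for q
  define G where "G p = (\<integral>b\<in>{0..}. exp (- b) * H (p, b) \<partial>lborel)" for p
  have "continuous_on UNIV jump"
    unfolding jump_def[abs_def] by (intro continuous_intros continuous_on_apply[of _ "\<lambda>q. fst (fst q)"])
  moreover have "continuous_on UNIV (\<lambda>q :: (('v \<Rightarrow> real) \<times> real) \<times> real. fst (fst q))"
    by (intro continuous_intros)
  ultimately have "H \<in> borel_measurable borel"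
    unfolding H_def[abs_def] by (intro borel_measurable_diff borel_measurable_continuous_comp[OF f(1)])
  moreover have "\<bar>H q\<bar> \<le> 2 * C" for q
    using f(2)[of "fst (fst q)"] f(2)[of "jump q"] unfolding H_def by linarith
  ultimately have "G \<in> borel_measurable borel" "\<And>p. \<bar>G p\<bar> \<le> 2 * C"
    unfolding G_def[abs_def] using set_integral_exp_Ici_bounded[of H "2 * C"] by auto
  then show "(\<lambda>z. \<integral>u\<in>{0..1}. (\<integral>b\<in>{0..}. exp (- b) *
            (f (z(i := u * (z i + z j), j := b * c)) - f z) \<partial>lborel) \<partial>lborel) \<in> borel_measurable borel"
    and "\<bar>\<integral>u\<in>{0..1}. (\<integral>b\<in>{0..}. exp (- b) *
            (f (z(i := u * (z i + z j), j := b * c)) - f z) \<partial>lborel) \<partial>lborel\<bar> \<le> 2 * C"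
    using set_integral_Icc01_bounded[of G "2 * C"] by (simp_all add: G_def H_def jump_def)
qed

lemma KMP_gen_bounded:
  fixes f :: "('v::finite \<Rightarrow> real) \<Rightarrow> real"
  assumes f: "f \<in> borel_measurable borel" "\<forall>z. \<bar>f z\<bar> \<le> C"
  shows "KMP_gen Ed B Tb f \<in> borel_measurable borel"
    and "\<bar>KMP_gen Ed B Tb f z\<bar> \<le> 2 * real (card (int_edges Ed B) + card (bd_edges Ed B)) * C"
proof -
  have "\<And>z. \<bar>f z\<bar> \<le> C"
    using f(2) ..
  note internal = KMP_internal_term_bounded[OF f(1) this]
    and boundary = KMP_boundary_term_bounded[OF f(1) this]
  show "KMP_gen Ed B Tb f \<in> borel_measurable borel"
    unfolding KMP_gen_def
    by (intro borel_measurable_add borel_measurable_sum) (auto simp: internal(1) boundary(1))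
  have "\<bar>KMP_gen Ed B Tb f z\<bar> \<le> (\<Sum>e\<in>int_edges Ed B. 2 * C) + (\<Sum>e\<in>bd_edges Ed B. 2 * C)"
    unfolding KMP_gen_def
    by (intro abs_triangle_ineq[THEN order_trans] add_mono sum_abs[THEN order_trans] sum_mono)
       (auto simp: internal(2) boundary(2))
  then show "\<bar>KMP_gen Ed B Tb f z\<bar> \<le> 2 * real (card (int_edges Ed B) + card (bd_edges Ed B)) * C"
    by (simp add: algebra_simps)
qed

lemma KMP_gen_bounded_borel:
  fixes f :: "('v::finite \<Rightarrow> real) \<Rightarrow> real"
  shows "f \<in> bounded_borel \<Longrightarrow> KMP_gen Ed B Tb f \<in> bounded_borel"
  using KMP_gen_bounded unfolding bounded_borel_def by blast

lemma semigroup_KMP_bounded_borel: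
  fixes f :: "('v::finite \<Rightarrow> real) \<Rightarrow> real"
  shows "f \<in> bounded_borel \<Longrightarrow> semigroup (KMP_gen Ed B Tb) t f \<in> bounded_borel"
  by (rule semigroup_bounded_borel[OF KMP_gen_bounded(1) KMP_gen_bounded(2)])

section \<open>The joint KMP--temperature generator\<close>

definition admissible_states :: "'v set \<Rightarrow> ('v \<Rightarrow> real) \<Rightarrow> (('v \<Rightarrow> real) \<times> ('v \<Rightarrow> real)) set" where
  "admissible_states B Tb = {(X, T). (\<forall>i. 0 \<le> X i) \<and> (\<forall>j\<in>B. T j = Tb j)}"

lemma XT_gen_locality:
  assumes graph: "graph_ok Ed B"
    and eq: "\<And>s. s \<in> admissible_states B Tb \<Longrightarrow> h s = h' s" and s: "s \<in> admissible_states B Tb"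
  shows "XT_gen Ed B h s = XT_gen Ed B h' s"
proof -
  obtain X T where XT: "s = (X, T)" by fastforce
  have X: "\<And>k. 0 \<le> X k" and T: "\<And>k. k \<in> B \<Longrightarrow> T k = Tb k"
    using s by (auto simp: XT admissible_states_def)
  have internal_jump: "(X(i := u * (X i + X j), j := (1 - u) * (X i + X j)),
      T(i := Tbar X T i j, j := Tbar X T i j)) \<in> admissible_states B Tb"
    if "(i, j) \<in> int_edges Ed B" "u \<in> {0..1}" for i j u
    using that X T graph by (auto simp: admissible_states_def int_edges_def graph_ok_def add_nonneg_nonneg)
  have boundary_jump: "(X(i := u * (X i + X j), j := b), T(i := Tbar X T i j)) \<in> admissible_states B Tb"
    if "(i, j) \<in> bd_edges Ed B" "u \<in> {0..1}" "b \<in> {0..}" for i j u b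
    using that X T graph by (auto simp: admissible_states_def bd_edges_def graph_ok_def add_nonneg_nonneg)
  show ?thesis
    unfolding XT XT_gen_def prod.case
    using eq[OF s[unfolded XT]] eq[OF internal_jump] eq[OF boundary_jump]
    by (intro arg_cong2[where f="(+)"] sum.cong refl)
       (auto intro!: set_lebesgue_integral_cong arg_cong2[where f="(*)"])
qed

definition energy :: "('v \<Rightarrow> real) \<times> ('v \<Rightarrow> real) \<Rightarrow> 'v \<Rightarrow> real" where
  "energy s = (\<lambda>i. fst s i * snd s i)"

text \<open>Tbar is the X-weighted mean of T i and T j, so an exchange conserves X i * T i + X j * T j.
  The sign condition matters: if X i + X j = 0, division by zero makes Tbar vanish.\<close>
lemma sum_mult_Tbar:
  assumes "0 \<le> X i" "0 \<le> X j"
  shows "(X i + X j) * Tbar X T i j = X i * T i + X j * T j"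
proof (cases "X i + X j = 0")
  case True
  then have "X i = 0" "X j = 0"
    using assms by linarith+
  then show ?thesis by (simp add: Tbar_def)
next
  case False
  have "Tbar X T i j = (X i * T i + X j * T j) / (X i + X j)"
    by (simp add: Tbar_def add_divide_distrib mult.commute)
  with False show ?thesis by simp
qed

lemma energy_internal_jump:
  assumes "0 \<le> X i" "0 \<le> X j"
  shows "energy (X(i := u * (X i + X j), j := (1 - u) * (X i + X j)), T(i := Tbar X T i j, j := Tbar X T i j))
    = (energy (X, T))(i := u * (energy (X, T) i + energy (X, T) j),
                      j := (1 - u) * (energy (X, T) i + energy (X, T) j))"
  using sum_mult_Tbar[of X i j T, OF assms] by (auto simp: energy_def fun_eq_iff mult.assoc)

lemma energy_boundary_jump:
  assumes "i \<noteq> j" "0 \<le> X i" "0 \<le> X j"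
  shows "energy (X(i := u * (X i + X j), j := b), T(i := Tbar X T i j))
    = (energy (X, T))(i := u * (energy (X, T) i + energy (X, T) j), j := b * T j)"
  using assms sum_mult_Tbar[of X i j T, OF assms(2,3)] by (auto simp: energy_def fun_eq_iff mult.assoc)

lemma boundary_jump_integral_swap:
  fixes f :: "('v::finite \<Rightarrow> real) \<Rightarrow> real"
  assumes "f \<in> bounded_borel"
  shows "(\<integral>b\<in>{0..}. exp (- b) * (\<integral>u\<in>{0..1}. (f (z(i := u * (z i + z j), j := b * c)) - f z) \<partial>lborel) \<partial>lborel)
       = (\<integral>u\<in>{0..1}. (\<integral>b\<in>{0..}. exp (- b) * (f (z(i := u * (z i + z j), j := b * c)) - f z) \<partial>lborel) \<partial>lborel)"
proof -
  obtain C where f: "f \<in> borel_measurable borel" "\<And>z. \<bar>f z\<bar> \<le> C"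
    using assms unfolding bounded_borel_def by blast
  define \<Phi> where "\<Phi> p = f (z(i := fst p * (z i + z j), j := snd p * c)) - f z" for p :: "real \<times> real"
  have "continuous_on UNIV (\<lambda>p :: real \<times> real. z(i := fst p * (z i + z j), j := snd p * c))"
    by (intro continuous_intros)
  then have "\<Phi> \<in> borel_measurable borel"
    unfolding \<Phi>_def[abs_def] by (intro borel_measurable_diff borel_measurable_continuous_comp[OF f(1)]) auto
  moreover have "\<bar>\<Phi> p\<bar> \<le> 2 * C" for p
    unfolding \<Phi>_def using f(2)[of z] f(2)[of "z(i := fst p * (z i + z j), j := snd p * c)"] by linarith
  ultimately have "(\<integral>u. indicator {0..1} u * (\<integral>b. (indicator {0..} b * exp (- b)) * \<Phi> (u, b) \<partial>lborel) \<partial>lborel)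
      = (\<integral>b. (indicator {0..} b * exp (- b)) * (\<integral>u. indicator {0..1} u * \<Phi> (u, b) \<partial>lborel) \<partial>lborel)"
    using integrable_exp_Ici
    by (intro Fubini_weighted_bounded[where C="2 * C"]) (auto simp: split: split_indicator)
  then show ?thesis
    by (simp add: set_lebesgue_integral_def \<Phi>_def mult.assoc)
qed

lemma XT_gen_marginal:
  fixes f :: "('v::finite \<Rightarrow> real) \<Rightarrow> real"
  assumes "f \<in> bounded_borel"
  shows "XT_gen Ed B (\<lambda>s. f (fst s)) s = KMP_gen Ed B (\<lambda>_. 1) f (fst s)"
proof -
  obtain X T where XT: "s = (X, T)" by fastforce
  show ?thesis
    unfolding XT XT_gen_def KMP_gen_def prod.case
    using boundary_jump_integral_swap[OF assms, where z = X and c = 1]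
    by (intro arg_cong2[where f="(+)"] sum.cong refl) auto
qed

lemma XT_gen_energy:
  fixes f :: "('v::finite \<Rightarrow> real) \<Rightarrow> real"
  assumes graph: "graph_ok Ed B" and f: "f \<in> bounded_borel" and s: "s \<in> admissible_states B Tb"
  shows "XT_gen Ed B (\<lambda>s. f (energy s)) s = KMP_gen Ed B Tb f (energy s)"
proof -
  obtain X T where XT: "s = (X, T)" by fastforce
  have X: "\<And>k. 0 \<le> X k" and T: "\<And>k. k \<in> B \<Longrightarrow> T k = Tb k"
    using s by (auto simp: XT admissible_states_def)
  have "i \<noteq> j" "T j = Tb j" if "(i, j) \<in> bd_edges Ed B" for i j
    using that graph T by (auto simp: bd_edges_def graph_ok_def)
  then show ?thesis
    unfolding XT XT_gen_def KMP_gen_def prod.case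
    using boundary_jump_integral_swap[OF f, where z = "energy (X, T)"]
    by (intro arg_cong2[where f="(+)"] sum.cong refl)
       (auto simp: energy_internal_jump energy_boundary_jump X)
qed

lemma XT_gen_intertwined_marginal:
  fixes Ed :: "('v::finite \<times> 'v) set"
  shows "intertwined_generators (XT_gen Ed B) (KMP_gen Ed B (\<lambda>_. 1)) fst UNIV"
proof unfold_locales
  show "XT_gen Ed B h s = XT_gen Ed B h' s" if "\<And>s. s \<in> UNIV \<Longrightarrow> h s = h' s" for h h' s
    using that by (metis UNIV_I)
qed (simp_all add: XT_gen_marginal KMP_gen_bounded_borel semigroup_KMP_bounded_borel)

lemma XT_gen_intertwined_energy:
  fixes Ed :: "('v::finite \<times> 'v) set"
  assumes "graph_ok Ed B"
  shows "intertwined_generators (XT_gen Ed B) (KMP_gen Ed B Tb) energy (admissible_states B Tb)"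
proof unfold_locales
  show "XT_gen Ed B h s = XT_gen Ed B h' s"
    if "\<And>s. s \<in> admissible_states B Tb \<Longrightarrow> h s = h' s" "s \<in> admissible_states B Tb" for h h' s
    using XT_gen_locality[OF assms that] .
  show "XT_gen Ed B (\<lambda>s. f (energy s)) s = KMP_gen Ed B Tb f (energy s)"
    if "f \<in> bounded_borel" "s \<in> admissible_states B Tb" for f s
    using XT_gen_energy[OF assms that] .
qed (simp_all add: KMP_gen_bounded_borel semigroup_KMP_bounded_borel)

theorem proposition2p2:
  fixes Ed :: "('v::finite \<times> 'v) set" and B :: "'v set" and Tb :: "'v \<Rightarrow> real"
    and X0 T0 :: "'v \<Rightarrow> real"
  assumes "graph_ok Ed B"
    and "\<forall>j\<in>B. Tb j > 0"
    and "\<forall>i. X0 i \<ge> 0" and "\<forall>i. T0 i \<ge> 0"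
    and "\<forall>j\<in>B. T0 j = Tb j"
  shows "\<forall>ps :: (real \<times> (('v \<Rightarrow> real) \<Rightarrow> real)) list.
           (\<forall>(s, g)\<in>set ps. s \<ge> 0 \<and> g \<in> borel_measurable borel \<and> (\<exists>C. \<forall>x. \<bar>g x\<bar> \<le> C)) \<longrightarrow>
             fdd (XT_gen Ed B) (map (\<lambda>(s, g). (s, \<lambda>(X, T). g X)) ps) (X0, T0)
               = fdd (KMP_gen Ed B (\<lambda>_. 1)) ps X0
           \<and> fdd (XT_gen Ed B) (map (\<lambda>(s, g). (s, \<lambda>(X, T). g (\<lambda>i. X i * T i))) ps) (X0, T0)
               = fdd (KMP_gen Ed B Tb) ps (\<lambda>i. X0 i * T0 i)"
proof -
  have bounded: "\<forall>(s, g)\<in>set ps. g \<in> bounded_borel"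
    if "\<forall>(s, g)\<in>set ps. s \<ge> 0 \<and> g \<in> borel_measurable borel \<and> (\<exists>C. \<forall>x. \<bar>g x\<bar> \<le> C)"
    for ps :: "(real \<times> (('v \<Rightarrow> real) \<Rightarrow> real)) list"
    using that by (auto simp: bounded_borel_def)
  have "(X0, T0) \<in> admissible_states B Tb"
    using assms(3,5) by (simp add: admissible_states_def)
  then show ?thesis
    using intertwined_generators.fdd_intertwines[OF XT_gen_intertwined_marginal bounded]
      intertwined_generators.fdd_intertwines[OF XT_gen_intertwined_energy[OF assms(1)] bounded]
    by (simp add: case_prod_unfold energy_def)
qed

end
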